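(* (1) For all $(x,v)\in\mathbb R^3_0\times\mathbb R^3$, $\nabla_xV(x,v)\cdot v + \nabla_vV(x,v)\cdot(-\mu x/|x|^3)=0$, where $\nabla_x V= k_1 v\times\Delta L + k_2\big(v\times(\Delta A\times v)-\tfrac{\mu}{|x|}\Delta A+\tfrac{\mu}{|x|^3}xx^T\Delta A\big)$ and $\nabla_v V = k_1\Delta L\times x + k_2\big((x\times v)\times\Delta A + x\times(v\times\Delta A)\big)$, with $\Delta L=L(x,v)-L_0$, $\Delta A=A(x,v)-A_0$. (2) For any $c$ with $0<c<\min\{k_1|L_0|^2/2,\ k_2(\mu-|A_0|)^2/2\}$, the set $V^{-1}([0,c])$ is a compact subset of $\mathbb R^3_0\times\mathbb R^3$.
   Context: $\mathbb R^3_0=\mathbb R^3\setminus\{0\}$, $\mu>0$. $L(x,v)=x\times v$ (angular momentum) and $A(x,v)=v\times(x\times v)-\mu x/|x|$ (Laplace–Runge–Lenz vector). Fix $L_0,A_0\in\mathbb R^3$ with $L_0\perp A_0$, $L_0\ne0$, $|A_0|<\mu$. With $k_1,k_2>0$, $V(x,v)=\tfrac{k_1}{2}|L(x,v)-L_0|^2+\tfrac{k_2}{2}|A(x,v)-A_0|^2$ on $\mathbb R^3_0\times\mathbb R^3$. *)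

theory Defs
  imports "HOL-Analysis.Analysis"
begin

definition angmom :: "real^3 \<Rightarrow> real^3 \<Rightarrow> real^3" where
  "angmom x v = cross3 x v"

definition lrl :: "real \<Rightarrow> real^3 \<Rightarrow> real^3 \<Rightarrow> real^3" where
  "lrl mu x v = cross3 v (cross3 x v) - (mu / norm x) *\<^sub>R x"

text \<open>V(x,v) = k1/2 |L - L0|^2 + k2/2 |A - A0|^2 (meaningful for x \<noteq> 0).\<close>
definition Vfun :: "real \<Rightarrow> real \<Rightarrow> real \<Rightarrow> real^3 \<Rightarrow> real^3 \<Rightarrow> real^3 \<Rightarrow> real^3 \<Rightarrow> real" where
  "Vfun mu k1 k2 L0 A0 x v =
     k1 / 2 * (norm (angmom x v - L0))\<^sup>2 + k2 / 2 * (norm (lrl mu x v - A0))\<^sup>2"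

definition gradxV :: "real \<Rightarrow> real \<Rightarrow> real \<Rightarrow> real^3 \<Rightarrow> real^3 \<Rightarrow> real^3 \<Rightarrow> real^3 \<Rightarrow> real^3" where
  "gradxV mu k1 k2 L0 A0 x v =
     (let dL = angmom x v - L0; dA = lrl mu x v - A0 in
      k1 *\<^sub>R cross3 v dL
      + k2 *\<^sub>R (cross3 v (cross3 dA v) - (mu / norm x) *\<^sub>R dA
                 + (mu / norm x ^ 3) *\<^sub>R ((x \<bullet> dA) *\<^sub>R x)))"

definition gradvV :: "real \<Rightarrow> real \<Rightarrow> real \<Rightarrow> real^3 \<Rightarrow> real^3 \<Rightarrow> real^3 \<Rightarrow> real^3 \<Rightarrow> real^3" where
  "gradvV mu k1 k2 L0 A0 x v =
     (let dL = angmom x v - L0; dA = lrl mu x v - A0 in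
      k1 *\<^sub>R cross3 dL x
      + k2 *\<^sub>R (cross3 (cross3 x v) dA + cross3 x (cross3 v dA)))"

end

theory Submission
  imports Defs
begin

text \<open>
  V is a function of the angular momentum L and the Laplace--Runge--Lenz vector A, both conserved
  by the Kepler flow, so its derivative along the Kepler vector field vanishes.
  On the sublevel set V \<le> c, the bound on c keeps L within distance a < |L0| of L0 and A within
  distance b < \<mu> - |A0| of A0. So |L| is pinched between positive constants and |A| stays below some \<alpha> < \<mu>.
  The identity |A|^2 = \<mu>^2 + (|v|^2 - 2\<mu>/|x|) |L|^2 then makes the energy negative and bounded away
  from zero, which bounds |x| from above and |v|^2 by 2\<mu>/|x|; with |L| \<le> |x| |v| this also bounds
  |x| away from 0. Hence the sublevel set is closed and bounded inside {|x| \<ge> r0}.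
\<close>

lemma bounded_bilinear_cross3: "bounded_bilinear cross3"
  using bilinear_conv_bounded_bilinear bilinear_cross by blast

lemmas has_derivative_cross3[derivative_intros] =
  bounded_bilinear.FDERIV[OF bounded_bilinear_cross3]

lemma has_derivative_norm_compose[derivative_intros]:
  assumes "(f has_derivative f') (at p within S)" "f p \<noteq> 0"
  shows "((\<lambda>p. norm (f p)) has_derivative (\<lambda>h. f' h \<bullet> sgn (f p))) (at p within S)"
  using has_derivative_compose[OF assms(1) has_derivative_norm[OF assms(2)]] by simp

lemma angmom_has_derivative:
  "((\<lambda>(y, w). angmom y w) has_derivative (\<lambda>(h, k). cross3 x k + cross3 h v)) (at (x, v))"
  unfolding angmom_def case_prod_beta'
  by (rule has_derivative_eq_rhs, (rule derivative_eq_intros | simp)+)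

lemma lrl_has_derivative:
  assumes "x \<noteq> 0"
  shows "((\<lambda>(y, w). lrl mu y w) has_derivative
           (\<lambda>(h, k). cross3 v (cross3 x k + cross3 h v) + cross3 k (cross3 x v)
                     - (mu / norm x) *\<^sub>R h + (mu / norm x ^ 3 * (x \<bullet> h)) *\<^sub>R x)) (at (x, v))"
  unfolding lrl_def case_prod_beta'
  by (rule has_derivative_eq_rhs, (rule derivative_eq_intros | simp add: assms)+)
     (use assms in \<open>auto simp: fun_eq_iff sgn_div_norm power3_eq_cube field_simps inner_commute\<close>)

lemma has_derivative_norm_diff_power2:
  assumes "(f has_derivative f') (at p)"
  shows "((\<lambda>q. (norm (f q - c))\<^sup>2) has_derivative (\<lambda>h. 2 * ((f p - c) \<bullet> f' h))) (at p)"
  unfolding power2_norm_eq_inner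
  by (rule has_derivative_eq_rhs, (rule derivative_eq_intros assms | simp)+)
     (simp add: fun_eq_iff inner_commute)

lemma Vfun_has_derivative:
  assumes "x \<noteq> 0"
  shows "((\<lambda>(y, w). Vfun mu k1 k2 L0 A0 y w) has_derivative
           (\<lambda>(h, k). gradxV mu k1 k2 L0 A0 x v \<bullet> h + gradvV mu k1 k2 L0 A0 x v \<bullet> k)) (at (x, v))"
proof -
  note dL = has_derivative_norm_diff_power2[OF angmom_has_derivative, where c = L0]
  note dA = has_derivative_norm_diff_power2[OF lrl_has_derivative[OF assms], where c = A0]
  have "((\<lambda>p. k1 / 2 * (norm ((\<lambda>(y, w). angmom y w) p - L0))\<^sup>2
              + k2 / 2 * (norm ((\<lambda>(y, w). lrl mu y w) p - A0))\<^sup>2) has_derivative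
          (\<lambda>hk. k1 / 2 * (2 * ((angmom x v - L0) \<bullet> (case hk of (h, k) \<Rightarrow> cross3 x k + cross3 h v)))
              + k2 / 2 * (2 * ((lrl mu x v - A0) \<bullet> (case hk of (h, k) \<Rightarrow>
                  cross3 v (cross3 x k + cross3 h v) + cross3 k (cross3 x v)
                  - (mu / norm x) *\<^sub>R h + (mu / norm x ^ 3 * (x \<bullet> h)) *\<^sub>R x))))) (at (x, v))"
    using dL dA by (intro derivative_intros) simp_all
  then show ?thesis
    unfolding Vfun_def case_prod_beta'
    by (rule has_derivative_eq_rhs)
       (simp add: fun_eq_iff gradxV_def gradvV_def Let_def cross3_simps inner_commute)
qed

lemma gradV_inner_Kepler_field:
  assumes "x \<noteq> 0"
  shows "gradxV mu k1 k2 L0 A0 x v \<bullet> v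
           + gradvV mu k1 k2 L0 A0 x v \<bullet> (- (mu / norm x ^ 3) *\<^sub>R x) = 0"
proof -
  define c where "c = mu / norm x ^ 3"
  have "mu / norm x = (x \<bullet> x) * c"
    using assms by (simp add: c_def power2_norm_eq_inner[symmetric] power3_eq_cube power2_eq_square)
  then show ?thesis
    unfolding gradxV_def gradvV_def Let_def c_def[symmetric]
    by (simp add: cross3_simps inner_commute)
qed

lemma norm_lrl_power2:
  assumes "x \<noteq> 0"
  shows "(norm (lrl mu x v))\<^sup>2 = mu\<^sup>2 + ((norm v)\<^sup>2 - 2 * mu / norm x) * (norm (angmom x v))\<^sup>2"
proof -
  let ?m = "mu / norm x" and ?L = "cross3 x v"
  let ?w = "cross3 v ?L"
  have "(norm (lrl mu x v))\<^sup>2 = (?w - ?m *\<^sub>R x) \<bullet> (?w - ?m *\<^sub>R x)"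
    by (simp add: lrl_def power2_norm_eq_inner)
  also have "\<dots> = ?w \<bullet> ?w - 2 * ?m * (?w \<bullet> x) + ?m\<^sup>2 * (x \<bullet> x)"
    by (simp add: inner_diff_left inner_diff_right inner_commute power2_eq_square algebra_simps)
  also have "\<dots> = (v \<bullet> v) * (?L \<bullet> ?L) - 2 * ?m * (?L \<bullet> ?L) + mu\<^sup>2"
  proof -
    have "?w \<bullet> ?w = (v \<bullet> v) * (?L \<bullet> ?L)" and "?w \<bullet> x = ?L \<bullet> ?L"
      by (simp_all add: cross3_simps)
    moreover have "?m\<^sup>2 * (x \<bullet> x) = mu\<^sup>2"
      using assms by (simp add: power2_norm_eq_inner[symmetric] power_divide)
    ultimately show ?thesis by simp
  qed
  finally show ?thesis
    by (simp add: angmom_def power2_norm_eq_inner algebra_simps)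
qed

lemma Kepler_orbit_bounds:
  assumes mu: "mu > 0" and x: "x \<noteq> 0"
    and l: "0 < l" "l \<le> norm (angmom x v)" "norm (angmom x v) \<le> l'"
    and a: "norm (lrl mu x v) \<le> a" "a < mu"
  shows "(norm v)\<^sup>2 \<le> 2 * mu / norm x"
    and "l\<^sup>2 / (2 * mu) \<le> norm x"
    and "norm x \<le> 2 * mu * l'\<^sup>2 / (mu\<^sup>2 - a\<^sup>2)"
proof -
  define r where "r = norm x"
  define e where "e = 2 * mu / r - (norm v)\<^sup>2"
  have r: "r > 0" using x by (simp add: r_def)
  have "(norm (lrl mu x v))\<^sup>2 \<le> a\<^sup>2"
    using a by (simp add: power_mono)
  then have eL: "mu\<^sup>2 - a\<^sup>2 \<le> e * (norm (angmom x v))\<^sup>2"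
    using norm_lrl_power2[OF x, of mu v] by (simp add: e_def r_def algebra_simps)
  have d: "mu\<^sup>2 - a\<^sup>2 > 0"
    using a mu by (smt (verit) norm_ge_zero power_strict_mono zero_less_numeral)
  have e: "e > 0"
    using eL d by (smt (verit) mult_nonpos_nonneg zero_le_power2)
  then show v: "(norm v)\<^sup>2 \<le> 2 * mu / norm x"
    by (simp add: e_def r_def)
  have "(norm (angmom x v))\<^sup>2 \<le> l'\<^sup>2"
    using l by (simp add: power_mono)
  then have "mu\<^sup>2 - a\<^sup>2 \<le> 2 * mu / r * l'\<^sup>2"
    using eL e by (smt (verit) e_def mult_left_mono mult_right_mono zero_le_power2)
  then show "norm x \<le> 2 * mu * l'\<^sup>2 / (mu\<^sup>2 - a\<^sup>2)"
    using d r by (simp add: r_def field_simps)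
  have "l\<^sup>2 \<le> (norm (angmom x v))\<^sup>2"
    using l by (simp add: power_mono)
  also have "\<dots> \<le> (r * norm v)\<^sup>2"
    using norm_cross_dot[of x v] unfolding angmom_def r_def by (smt (verit) zero_le_power2)
  also have "\<dots> \<le> r\<^sup>2 * (2 * mu / r)"
    unfolding power_mult_distrib using v by (intro mult_left_mono) (simp_all add: r_def)
  also have "\<dots> = 2 * mu * r"
    using r by (simp add: power2_eq_square)
  finally show "l\<^sup>2 / (2 * mu) \<le> norm x"
    using mu by (simp add: r_def divide_le_eq mult.commute)
qed

lemma Vfun_sublevel_bounded:
  assumes mu: "mu > 0" and k: "k1 > 0" "k2 > 0" and A0: "norm A0 < mu"
    and c: "c < min (k1 * (norm L0)\<^sup>2 / 2) (k2 * (mu - norm A0)\<^sup>2 / 2)"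
  obtains r0 R W where "r0 > 0"
    and "\<And>x v. x \<noteq> 0 \<Longrightarrow> Vfun mu k1 k2 L0 A0 x v \<le> c \<Longrightarrow>
           r0 \<le> norm x \<and> norm x \<le> R \<and> norm v \<le> W"
proof
  define a where "a = sqrt (2 * c / k1)"
  define b where "b = sqrt (2 * c / k2)"
  have aL: "a < norm L0"
  proof -
    have "2 * c / k1 < (norm L0)\<^sup>2" using c k by (simp add: field_simps)
    then show ?thesis
      unfolding a_def by (metis norm_ge_zero real_sqrt_abs real_sqrt_less_mono abs_of_nonneg)
  qed
  have bA: "b < mu - norm A0"
  proof -
    have "2 * c / k2 < (mu - norm A0)\<^sup>2" using c k by (simp add: field_simps)
    then show ?thesis
      unfolding b_def using A0
      by (metis diff_ge_0_iff_ge less_imp_le real_sqrt_abs real_sqrt_less_mono abs_of_nonneg)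
  qed
  show "(norm L0 - a)\<^sup>2 / (2 * mu) > 0"
    using aL mu by simp
  fix x v
  assume x: "x \<noteq> 0" and V: "Vfun mu k1 k2 L0 A0 x v \<le> c"
  have "k1 / 2 * (norm (angmom x v - L0))\<^sup>2 \<le> c" "k2 / 2 * (norm (lrl mu x v - A0))\<^sup>2 \<le> c"
    using V k unfolding Vfun_def by (smt (verit) mult_nonneg_nonneg zero_le_power2 divide_nonneg_pos)+
  then have dL: "norm (angmom x v - L0) \<le> a" and dA: "norm (lrl mu x v - A0) \<le> b"
    unfolding a_def b_def using k by (auto intro!: real_le_rsqrt simp: field_simps)
  have "norm L0 - a \<le> norm (angmom x v)" "norm (angmom x v) \<le> norm L0 + a"
    using dL norm_triangle_ineq2[of L0 "angmom x v"] norm_triangle_ineq2[of "angmom x v" L0]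
    by (simp_all add: norm_minus_commute)
  moreover have "norm (lrl mu x v) \<le> norm A0 + b"
    using dA norm_triangle_ineq2[of "lrl mu x v" A0] by simp
  moreover have "0 < norm L0 - a" "norm A0 + b < mu"
    using aL bA by simp_all
  ultimately have v: "(norm v)\<^sup>2 \<le> 2 * mu / norm x"
    and lower: "(norm L0 - a)\<^sup>2 / (2 * mu) \<le> norm x"
    and upper: "norm x \<le> 2 * mu * (norm L0 + a)\<^sup>2 / (mu\<^sup>2 - (norm A0 + b)\<^sup>2)"
    using Kepler_orbit_bounds[OF mu x] by blast+
  have "(norm v)\<^sup>2 \<le> 2 * mu / ((norm L0 - a)\<^sup>2 / (2 * mu))"
    using v lower aL mu
    by (smt (verit) divide_left_mono mult_pos_pos zero_less_divide_iff zero_less_power2)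
  then show "(norm L0 - a)\<^sup>2 / (2 * mu) \<le> norm x \<and>
        norm x \<le> 2 * mu * (norm L0 + a)\<^sup>2 / (mu\<^sup>2 - (norm A0 + b)\<^sup>2) \<and>
        norm v \<le> sqrt (2 * mu / ((norm L0 - a)\<^sup>2 / (2 * mu)))"
    using lower upper real_le_rsqrt by blast
qed

lemma compact_punctured_preimage:
  fixes f :: "'a::euclidean_space \<times> 'b::euclidean_space \<Rightarrow> real"
  assumes cont: "continuous_on {p. fst p \<noteq> 0} f" and T: "closed T" and r0: "r0 > 0"
    and bounded: "\<And>x v. x \<noteq> 0 \<Longrightarrow> f (x, v) \<in> T \<Longrightarrow> r0 \<le> norm x \<and> norm x \<le> R \<and> norm v \<le> W"
  shows "compact {(x, v). x \<noteq> 0 \<and> f (x, v) \<in> T}"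
proof -
  let ?S = "{p. r0 \<le> norm (fst p)}"
  have "{(x, v). x \<noteq> 0 \<and> f (x, v) \<in> T} = (cball 0 R \<times> cball 0 W) \<inter> (?S \<inter> f -` T)"
    using bounded r0 by fastforce
  moreover have "closed (?S \<inter> f -` T)"
  proof (rule continuous_closed_preimage)
    show "continuous_on ?S f"
      by (rule continuous_on_subset[OF cont]) (use r0 in auto)
  qed (auto intro!: closed_Collect_le continuous_intros T)
  ultimately show ?thesis
    by (simp add: compact_Int_closed compact_Times)
qed

theorem lemma6:
  fixes mu k1 k2 :: real and L0 A0 :: "real^3"
  assumes "mu > 0" and "k1 > 0" and "k2 > 0"
    and "L0 \<bullet> A0 = 0" and "L0 \<noteq> 0" and "norm A0 < mu"
  shows "(\<forall>x v. x \<noteq> 0 \<longrightarrow>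
            ((\<lambda>(y, w). Vfun mu k1 k2 L0 A0 y w) has_derivative
               (\<lambda>(h, k). gradxV mu k1 k2 L0 A0 x v \<bullet> h + gradvV mu k1 k2 L0 A0 x v \<bullet> k))
              (at (x, v))
          \<and> gradxV mu k1 k2 L0 A0 x v \<bullet> v
            + gradvV mu k1 k2 L0 A0 x v \<bullet> (- (mu / norm x ^ 3) *\<^sub>R x) = 0)
       \<and> (\<forall>c. 0 < c \<and> c < min (k1 * (norm L0)\<^sup>2 / 2) (k2 * (mu - norm A0)\<^sup>2 / 2) \<longrightarrow>
            compact {(x, v). x \<noteq> 0 \<and> Vfun mu k1 k2 L0 A0 x v \<in> {0..c}})"
proof (intro conjI allI impI)
  fix x v :: "real^3"
  assume "x \<noteq> 0"
  then show "((\<lambda>(y, w). Vfun mu k1 k2 L0 A0 y w) has_derivative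
               (\<lambda>(h, k). gradxV mu k1 k2 L0 A0 x v \<bullet> h + gradvV mu k1 k2 L0 A0 x v \<bullet> k)) (at (x, v))"
    and "gradxV mu k1 k2 L0 A0 x v \<bullet> v + gradvV mu k1 k2 L0 A0 x v \<bullet> (- (mu / norm x ^ 3) *\<^sub>R x) = 0"
    by (rule Vfun_has_derivative, rule gradV_inner_Kepler_field)
next
  fix c :: real
  assume "0 < c \<and> c < min (k1 * (norm L0)\<^sup>2 / 2) (k2 * (mu - norm A0)\<^sup>2 / 2)"
  then obtain r0 R W where "r0 > 0"
    and bounded: "\<And>x v. x \<noteq> 0 \<Longrightarrow> Vfun mu k1 k2 L0 A0 x v \<le> c \<Longrightarrow>
                   r0 \<le> norm x \<and> norm x \<le> R \<and> norm v \<le> W"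
    using Vfun_sublevel_bounded assms(1,2,3,6) by blast
  have "continuous_on {p. fst p \<noteq> 0} (\<lambda>(y, w). Vfun mu k1 k2 L0 A0 y w)"
    using Vfun_has_derivative has_derivative_continuous
    by (fastforce intro!: continuous_at_imp_continuous_on)
  moreover have "\<And>x v. x \<noteq> 0 \<Longrightarrow> (\<lambda>(y, w). Vfun mu k1 k2 L0 A0 y w) (x, v) \<in> {0..c} \<Longrightarrow>
                   r0 \<le> norm x \<and> norm x \<le> R \<and> norm v \<le> W"
    using bounded by auto
  ultimately have "compact {(x, v). x \<noteq> 0 \<and> (\<lambda>(y, w). Vfun mu k1 k2 L0 A0 y w) (x, v) \<in> {0..c}}"
    by (rule compact_punctured_preimage[OF _ closed_atLeastAtMost \<open>r0 > 0\<close>])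
  then show "compact {(x, v). x \<noteq> 0 \<and> Vfun mu k1 k2 L0 A0 x v \<in> {0..c}}"
    by simp
qed

end
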